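(* Let $\epsilon$ be real and, for $i=1,2$, let $\alpha_i,\beta_i,\eta_i$ be real constants with $\beta_i^2=e^{\alpha_i\epsilon}+e^{-\alpha_i\epsilon}-2$. Assume $P(p_1+p_2)\neq0$ and set $A(1,2)=-\dfrac{P(p_1-p_2)}{P(p_1+p_2)}$. Then $$f(x,t)=1+e^{\theta_1}+e^{\theta_2}+A(1,2)e^{\theta_1+\theta_2},\qquad \theta_i=-\frac{\alpha_i}{x}+\beta_i t+\eta_i,$$ satisfies the bilinear generalized $q$-Toda equation $\big[D_t^2-\big(e^{\epsilon x^2D_x}+e^{-\epsilon x^2 D_x}-2\big)\big]f\cdot f=0$.
   Context: Hirota operators: $P(D_x,D_t)\,f\cdot g := P(\partial_x-\partial_{x'},\partial_t-\partial_{t'})f(x,t)g(x',t')|_{x'=x,t'=t}$; $e^{\pm\epsilon x^2 D_x} f\cdot g$ means $f\!\left(\frac{x}{1\mp\epsilon x}\right)g\!\left(\frac{x}{1\pm\epsilon x}\right)$. For a vector $p=(\beta,\alpha,\eta)$ define $P(p)=\beta^2-\big(e^{\alpha\epsilon}+e^{-\alpha\epsilon}-2\big)$, and $p_i=(\beta_i,\alpha_i,\eta_i)$ with componentwise sums and differences. *)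

theory Defs
  imports "HOL-Analysis.Analysis"
begin

text \<open>Hirota operator D_t^2 applied to f . g (functions of (x,t)), evaluated at (x,t):
  (d_t - d_t')^2 f(x,t) g(x,t') at t'=t, i.e. f_tt g - 2 f_t g_t + f g_tt.\<close>
definition hirota_Dt2 :: "(real \<Rightarrow> real \<Rightarrow> real) \<Rightarrow> (real \<Rightarrow> real \<Rightarrow> real) \<Rightarrow> real \<Rightarrow> real \<Rightarrow> real" where
  "hirota_Dt2 f g x t =
     deriv (deriv (\<lambda>s. f x s)) t * g x t
     - 2 * deriv (\<lambda>s. f x s) t * deriv (\<lambda>s. g x s) t
     + f x t * deriv (deriv (\<lambda>s. g x s)) t"

text \<open>exp(+-eps x^2 D_x) f . g = f(x/(1 -+ eps x)) g(x/(1 +- eps x)).\<close>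
definition q_shift :: "real \<Rightarrow> (real \<Rightarrow> real \<Rightarrow> real) \<Rightarrow> (real \<Rightarrow> real \<Rightarrow> real) \<Rightarrow> real \<Rightarrow> real \<Rightarrow> real" where
  "q_shift e f g x t = f (x / (1 - e * x)) t * g (x / (1 + e * x)) t"

definition qToda_lhs :: "real \<Rightarrow> (real \<Rightarrow> real \<Rightarrow> real) \<Rightarrow> (real \<Rightarrow> real \<Rightarrow> real) \<Rightarrow> real \<Rightarrow> real \<Rightarrow> real" where
  "qToda_lhs e f g x t =
     hirota_Dt2 f g x t - (q_shift e f g x t + q_shift (-e) f g x t - 2 * (f x t * g x t))"

definition Pp :: "real \<Rightarrow> real \<times> real \<times> real \<Rightarrow> real" where
  "Pp e p = (case p of (\<beta>, \<alpha>, \<eta>) \<Rightarrow> \<beta>^2 - (exp (\<alpha> * e) + exp (- \<alpha> * e) - 2))"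

end

theory Submission
  imports Defs
begin

text \<open>
  Write the two-soliton \<open>f = 1 + E1 + E2 + A E1 E2\<close> with \<open>Ei = exp \<theta>i\<close>.
  In time, \<open>f\<close> is a combination of exponentials, so \<open>D_t\<^sup>2 f\<cdot>f\<close> is a polynomial in
  \<open>E1, E2\<close> with coefficients built from \<open>\<beta>1, \<beta>2\<close>.  The Moebius substitutions
  \<open>x \<mapsto> x / (1 \<mp> \<epsilon> x)\<close> shift the phases by \<open>\<pm>\<alpha>i \<epsilon>\<close>, i.e. multiply \<open>Ei\<close> by
  \<open>exp (\<pm>\<alpha>i \<epsilon>)\<close>.  Collecting terms, the whole bilinear expression becomes
    \<open>2 (E1 P(p1) + E2 P(p2) + A E1\<^sup>2 E2 P(p2) + A E1 E2\<^sup>2 P(p1)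
        + E1 E2 (A P(p1+p2) + P(p1-p2)))\<close>
  for arbitrary \<open>A\<close> (lemma \<open>qToda_two_soliton\<close>).  The dispersion relations say
  \<open>P(p1) = P(p2) = 0\<close>, and the choice of \<open>A(1,2)\<close> makes the interaction coefficient
  vanish, which proves the theorem.
\<close>

definition phase :: "real \<times> real \<times> real \<Rightarrow> real \<Rightarrow> real \<Rightarrow> real" where
  "phase p x t = (case p of (\<beta>, \<alpha>, \<eta>) \<Rightarrow> - \<alpha> / x + \<beta> * t + \<eta>)"

lemma phase_eq: "phase (\<beta>, \<alpha>, \<eta>) x t = - \<alpha> / x + \<beta> * t + \<eta>"
  by (simp add: phase_def)

definition tau :: "real \<Rightarrow> real \<Rightarrow> real \<Rightarrow> real" where
  "tau A E1 E2 = 1 + E1 + E2 + A * (E1 * E2)"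

definition two_soliton :: "real \<Rightarrow> real \<times> real \<times> real \<Rightarrow> real \<times> real \<times> real \<Rightarrow> real \<Rightarrow> real \<Rightarrow> real" where
  "two_soliton A p1 p2 x t = tau A (exp (phase p1 x t)) (exp (phase p2 x t))"

definition disp :: "real \<Rightarrow> real \<Rightarrow> real" where
  "disp b u = b\<^sup>2 - (u + 1 / u - 2)"

lemma Pp_eq_disp: "Pp e (\<beta>, \<alpha>, \<eta>) = disp \<beta> (exp (\<alpha> * e))"
  by (simp add: Pp_def disp_def exp_minus field_simps)

lemma Pp_sum: "Pp e (\<beta>1 + \<beta>2, \<alpha>1 + \<alpha>2, \<eta>) = disp (\<beta>1 + \<beta>2) (exp (\<alpha>1 * e) * exp (\<alpha>2 * e))"
  by (simp add: Pp_eq_disp distrib_right exp_add)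

lemma Pp_diff: "Pp e (\<beta>1 - \<beta>2, \<alpha>1 - \<alpha>2, \<eta>) = disp (\<beta>1 - \<beta>2) (exp (\<alpha>1 * e) / exp (\<alpha>2 * e))"
  by (simp add: Pp_eq_disp left_diff_distrib exp_diff)

lemma phase_shift:
  assumes "x \<noteq> 0" and "1 - c * x \<noteq> 0"
  shows "phase (\<beta>, \<alpha>, \<eta>) (x / (1 - c * x)) t = phase (\<beta>, \<alpha>, \<eta>) x t + \<alpha> * c"
  using assms by (simp add: phase_eq field_simps)

lemma two_soliton_shift:
  assumes "x \<noteq> 0" and "1 - c * x \<noteq> 0"
  shows "two_soliton A (\<beta>1, \<alpha>1, \<eta>1) (\<beta>2, \<alpha>2, \<eta>2) (x / (1 - c * x)) t =
         tau A (exp (\<alpha>1 * c) * exp (phase (\<beta>1, \<alpha>1, \<eta>1) x t))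
               (exp (\<alpha>2 * c) * exp (phase (\<beta>2, \<alpha>2, \<eta>2) x t))"
  using assms by (simp add: two_soliton_def phase_shift exp_add mult.commute)

text \<open>Time derivatives: each exponential \<open>exp \<theta>\<close> is an eigenfunction of \<open>\<partial>\<^sub>t\<close>
  with eigenvalue the sum of the \<open>\<beta>\<close>'s in \<open>\<theta>\<close>.\<close>
lemma deriv_two_soliton:
  "deriv (two_soliton A (\<beta>1, \<alpha>1, \<eta>1) (\<beta>2, \<alpha>2, \<eta>2) x) =
   (\<lambda>s. \<beta>1 * exp (phase (\<beta>1, \<alpha>1, \<eta>1) x s) + \<beta>2 * exp (phase (\<beta>2, \<alpha>2, \<eta>2) x s)
        + A * (\<beta>1 + \<beta>2) * (exp (phase (\<beta>1, \<alpha>1, \<eta>1) x s) * exp (phase (\<beta>2, \<alpha>2, \<eta>2) x s)))"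
  unfolding two_soliton_def tau_def phase_eq
  by (rule ext, rule DERIV_imp_deriv, (rule derivative_eq_intros refl)+, simp add: algebra_simps)

lemma deriv2_two_soliton:
  "deriv (deriv (two_soliton A (\<beta>1, \<alpha>1, \<eta>1) (\<beta>2, \<alpha>2, \<eta>2) x)) t =
   \<beta>1\<^sup>2 * exp (phase (\<beta>1, \<alpha>1, \<eta>1) x t) + \<beta>2\<^sup>2 * exp (phase (\<beta>2, \<alpha>2, \<eta>2) x t)
   + A * (\<beta>1 + \<beta>2)\<^sup>2 * (exp (phase (\<beta>1, \<alpha>1, \<eta>1) x t) * exp (phase (\<beta>2, \<alpha>2, \<eta>2) x t))"
  unfolding deriv_two_soliton phase_eq
  by (rule DERIV_imp_deriv, (rule derivative_eq_intros refl)+,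
      simp add: algebra_simps power2_eq_square)

lemma bilinear_identity:
  fixes u w b1 b2 A E1 E2 :: real
  assumes "u \<noteq> 0" and "w \<noteq> 0"
  shows "(b1\<^sup>2 * E1 + b2\<^sup>2 * E2 + A * (b1 + b2)\<^sup>2 * (E1 * E2)) * tau A E1 E2
     - 2 * (b1 * E1 + b2 * E2 + A * (b1 + b2) * (E1 * E2)) * (b1 * E1 + b2 * E2 + A * (b1 + b2) * (E1 * E2))
     + tau A E1 E2 * (b1\<^sup>2 * E1 + b2\<^sup>2 * E2 + A * (b1 + b2)\<^sup>2 * (E1 * E2))
     - (tau A (u * E1) (w * E2) * tau A (E1 / u) (E2 / w)
        + tau A (E1 / u) (E2 / w) * tau A (u * E1) (w * E2)
        - 2 * (tau A E1 E2 * tau A E1 E2))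
   = 2 * (E1 * disp b1 u + E2 * disp b2 w
          + A * E1\<^sup>2 * E2 * disp b2 w + A * E1 * E2\<^sup>2 * disp b1 u
          + E1 * E2 * (A * disp (b1 + b2) (u * w) + disp (b1 - b2) (u / w)))"
  using assms unfolding tau_def disp_def
  by (simp add: field_simps) (simp add: algebra_simps power2_eq_square)

lemma qToda_two_soliton:
  fixes e x t A \<beta>1 \<alpha>1 \<eta>1 \<beta>2 \<alpha>2 \<eta>2 :: real
  defines "f \<equiv> two_soliton A (\<beta>1, \<alpha>1, \<eta>1) (\<beta>2, \<alpha>2, \<eta>2)"
    and "E1 \<equiv> exp (phase (\<beta>1, \<alpha>1, \<eta>1) x t)"
    and "E2 \<equiv> exp (phase (\<beta>2, \<alpha>2, \<eta>2) x t)"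
  assumes x: "x \<noteq> 0" and plus: "1 - e * x \<noteq> 0" and minus: "1 + e * x \<noteq> 0"
  shows "qToda_lhs e f f x t =
     2 * (E1 * Pp e (\<beta>1, \<alpha>1, \<eta>1) + E2 * Pp e (\<beta>2, \<alpha>2, \<eta>2)
          + A * E1\<^sup>2 * E2 * Pp e (\<beta>2, \<alpha>2, \<eta>2) + A * E1 * E2\<^sup>2 * Pp e (\<beta>1, \<alpha>1, \<eta>1)
          + E1 * E2 * (A * Pp e (\<beta>1 + \<beta>2, \<alpha>1 + \<alpha>2, \<eta>1 + \<eta>2)
                       + Pp e (\<beta>1 - \<beta>2, \<alpha>1 - \<alpha>2, \<eta>1 - \<eta>2)))"
proof -
  define u where "u = exp (\<alpha>1 * e)"
  define w where "w = exp (\<alpha>2 * e)"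
  have "1 - (- e) * x \<noteq> 0" using minus by simp
  then have shift_minus: "f (x / (1 + e * x)) t = tau A (E1 / u) (E2 / w)"
    using two_soliton_shift[OF x, of "- e"]
    by (simp add: f_def E1_def E2_def u_def w_def exp_minus divide_inverse mult.commute)
  have shift_plus: "f (x / (1 - e * x)) t = tau A (u * E1) (w * E2)"
    using two_soliton_shift[OF x plus] by (simp add: f_def E1_def E2_def u_def w_def)
  have time1: "deriv (f x) t = \<beta>1 * E1 + \<beta>2 * E2 + A * (\<beta>1 + \<beta>2) * (E1 * E2)"
    by (simp add: f_def E1_def E2_def deriv_two_soliton)
  have time2: "deriv (deriv (f x)) t = \<beta>1\<^sup>2 * E1 + \<beta>2\<^sup>2 * E2 + A * (\<beta>1 + \<beta>2)\<^sup>2 * (E1 * E2)"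
    by (simp only: f_def E1_def E2_def deriv2_two_soliton)
  \<comment> \<open>\<open>q_shift (-e)\<close> evaluates at the same two points as \<open>q_shift e\<close>, swapped\<close>
  have neg: "1 - - e * x = 1 + e * x" "1 + - e * x = 1 - e * x" by simp_all
  have "qToda_lhs e f f x t =
     (\<beta>1\<^sup>2 * E1 + \<beta>2\<^sup>2 * E2 + A * (\<beta>1 + \<beta>2)\<^sup>2 * (E1 * E2)) * tau A E1 E2
     - 2 * (\<beta>1 * E1 + \<beta>2 * E2 + A * (\<beta>1 + \<beta>2) * (E1 * E2)) * (\<beta>1 * E1 + \<beta>2 * E2 + A * (\<beta>1 + \<beta>2) * (E1 * E2))
     + tau A E1 E2 * (\<beta>1\<^sup>2 * E1 + \<beta>2\<^sup>2 * E2 + A * (\<beta>1 + \<beta>2)\<^sup>2 * (E1 * E2))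
     - (tau A (u * E1) (w * E2) * tau A (E1 / u) (E2 / w)
        + tau A (E1 / u) (E2 / w) * tau A (u * E1) (w * E2)
        - 2 * (tau A E1 E2 * tau A E1 E2))"
    unfolding qToda_lhs_def hirota_Dt2_def q_shift_def neg time1 time2 shift_plus shift_minus
    by (simp add: f_def E1_def E2_def two_soliton_def)
  also have "\<dots> = 2 * (E1 * disp \<beta>1 u + E2 * disp \<beta>2 w
          + A * E1\<^sup>2 * E2 * disp \<beta>2 w + A * E1 * E2\<^sup>2 * disp \<beta>1 u
          + E1 * E2 * (A * disp (\<beta>1 + \<beta>2) (u * w) + disp (\<beta>1 - \<beta>2) (u / w)))"
    by (rule bilinear_identity) (simp_all add: u_def w_def)
  finally show ?thesis
    unfolding Pp_sum Pp_diff by (simp add: Pp_eq_disp u_def w_def)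
qed

theorem mainTheorem3:
  fixes e \<alpha>1 \<beta>1 \<eta>1 \<alpha>2 \<beta>2 \<eta>2 :: real
  assumes disp1: "\<beta>1^2 = exp (\<alpha>1 * e) + exp (- \<alpha>1 * e) - 2"
    and disp2: "\<beta>2^2 = exp (\<alpha>2 * e) + exp (- \<alpha>2 * e) - 2"
    and nz: "Pp e (\<beta>1 + \<beta>2, \<alpha>1 + \<alpha>2, \<eta>1 + \<eta>2) \<noteq> 0"
  shows "let A = - Pp e (\<beta>1 - \<beta>2, \<alpha>1 - \<alpha>2, \<eta>1 - \<eta>2) / Pp e (\<beta>1 + \<beta>2, \<alpha>1 + \<alpha>2, \<eta>1 + \<eta>2);
             \<theta>1 = (\<lambda>x t. - \<alpha>1 / x + \<beta>1 * t + \<eta>1);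
             \<theta>2 = (\<lambda>x t. - \<alpha>2 / x + \<beta>2 * t + \<eta>2);
             f = (\<lambda>x t. 1 + exp (\<theta>1 x t) + exp (\<theta>2 x t) + A * exp (\<theta>1 x t + \<theta>2 x t))
         in \<forall>x t. x \<noteq> 0 \<and> 1 - e * x \<noteq> 0 \<and> 1 + e * x \<noteq> 0 \<longrightarrow> qToda_lhs e f f x t = 0"
proof -
  define A where "A = - Pp e (\<beta>1 - \<beta>2, \<alpha>1 - \<alpha>2, \<eta>1 - \<eta>2) / Pp e (\<beta>1 + \<beta>2, \<alpha>1 + \<alpha>2, \<eta>1 + \<eta>2)"
  have P1: "Pp e (\<beta>1, \<alpha>1, \<eta>1) = 0" and P2: "Pp e (\<beta>2, \<alpha>2, \<eta>2) = 0"
    using disp1 disp2 by (simp_all add: Pp_def)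
  have interaction: "A * Pp e (\<beta>1 + \<beta>2, \<alpha>1 + \<alpha>2, \<eta>1 + \<eta>2) + Pp e (\<beta>1 - \<beta>2, \<alpha>1 - \<alpha>2, \<eta>1 - \<eta>2) = 0"
    using nz by (simp add: A_def)
  have f: "(\<lambda>x t. 1 + exp (- \<alpha>1 / x + \<beta>1 * t + \<eta>1) + exp (- \<alpha>2 / x + \<beta>2 * t + \<eta>2)
              + A * exp (- \<alpha>1 / x + \<beta>1 * t + \<eta>1 + (- \<alpha>2 / x + \<beta>2 * t + \<eta>2)))
         = two_soliton A (\<beta>1, \<alpha>1, \<eta>1) (\<beta>2, \<alpha>2, \<eta>2)"
    by (intro ext) (simp add: two_soliton_def tau_def phase_eq exp_add)
  show ?thesis
    unfolding Let_def A_def[symmetric] f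
    using qToda_two_soliton P1 P2 interaction by simp
qed

end
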